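(* In the polytope-code decoding setting described in the context, for every vertex $v_i \in V^*$ we have $\bar y_i = y_i$.
   Context: Let $T\ge 1$, $N > T$, $N_0\ge1$ be integers. An eligible $(N,N-T)$-generator matrix is an $N\times(N-T)$ matrix $A=(A_{ij})$ with nonnegative integer entries whose first $N-T$ rows form the identity matrix and such that every $(N-T)\times(N-T)$ submatrix obtained by choosing $N-T$ rows is nonsingular. Given $x_1,\dots,x_{N-T}\in\mathbb{Z}^{N_0}$, the transmitted codewords are $y_i = \sum_{j=1}^{N-T} A_{ij} x_j \in \mathbb{Z}^{N_0}$, $i\in[N]$. The decoder receives $\bar y_1,\dots,\bar y_N\in\mathbb{Z}^{N_0}$, where $\bar y_i = y_i$ for all $i$ outside some unknown set of at most $T$ indices, and it knows exactly the values $F_{ij} = \langle y_i,y_j\rangle$ for all $i,j\in[N]$. The syndrome graph $G$ has vertices $v_1,\dots,v_N$; for $i\ne j$ there is an edge between $v_i$ and $v_j$ iff $\langle \bar y_i,\bar y_j\rangle = F_{ij}$, and there is a self-loop at $v_i$ iff $\langle \bar y_i,\bar y_i\rangle = F_{ii}$. Let $\hat G$ be obtained from $G$ by deleting every vertex without a self-loop (and its incident edges). Let $V'$ be the set of vertices of $\hat G$ that belong to some clique (set of pairwise adjacent distinct vertices) of size at least $N-T$ in $\hat G$. Let $V^*$ be the set of $v_i\in V'$ such that $v_i$ is adjacent in $\hat G$ to every $v_j \in V'$ (adjacency of $v_i$ to itself being given by its self-loop). *)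

theory Defs
  imports "Jordan_Normal_Form.Determinant"
begin

text \<open>Vectors in Z^N0 are functions nat => int; only components k < N0 matter.
  Indices of rows/codewords are 0..N-1, information symbols 0..N-T-1.\<close>

definition ip :: "nat \<Rightarrow> (nat \<Rightarrow> int) \<Rightarrow> (nat \<Rightarrow> int) \<Rightarrow> int" where
  "ip N0 u v = (\<Sum>k<N0. u k * v k)"

definition eligible_generator :: "nat \<Rightarrow> nat \<Rightarrow> (nat \<Rightarrow> nat \<Rightarrow> nat) \<Rightarrow> bool" where
  "eligible_generator N K A \<longleftrightarrow>
     (\<forall>i<K. \<forall>j<K. A i j = (if i = j then 1 else 0)) \<and>
     (\<forall>S. S \<subseteq> {..<N} \<and> card S = K \<longrightarrow>
        det (mat K K (\<lambda>(r, c). int (A (sorted_list_of_set S ! r) c))) \<noteq> 0)"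

definition codeword :: "nat \<Rightarrow> (nat \<Rightarrow> nat \<Rightarrow> nat) \<Rightarrow> (nat \<Rightarrow> nat \<Rightarrow> int) \<Rightarrow> nat \<Rightarrow> nat \<Rightarrow> int" where
  "codeword K A x i = (\<lambda>k. \<Sum>j<K. int (A i j) * x j k)"

definition syn_adj :: "nat \<Rightarrow> (nat \<Rightarrow> nat \<Rightarrow> int) \<Rightarrow> (nat \<Rightarrow> nat \<Rightarrow> int) \<Rightarrow> nat \<Rightarrow> nat \<Rightarrow> bool" where
  "syn_adj N0 F ybar i j \<longleftrightarrow> ip N0 (ybar i) (ybar j) = F i j"

text \<open>Vertex set of G-hat: vertices with a self-loop.\<close>
definition hat_vertices :: "nat \<Rightarrow> nat \<Rightarrow> (nat \<Rightarrow> nat \<Rightarrow> int) \<Rightarrow> (nat \<Rightarrow> nat \<Rightarrow> int) \<Rightarrow> nat set" where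
  "hat_vertices N N0 F ybar = {i. i < N \<and> syn_adj N0 F ybar i i}"

definition hat_clique :: "nat \<Rightarrow> nat \<Rightarrow> (nat \<Rightarrow> nat \<Rightarrow> int) \<Rightarrow> (nat \<Rightarrow> nat \<Rightarrow> int) \<Rightarrow> nat set \<Rightarrow> bool" where
  "hat_clique N N0 F ybar C \<longleftrightarrow> C \<subseteq> hat_vertices N N0 F ybar \<and>
     (\<forall>i\<in>C. \<forall>j\<in>C. i \<noteq> j \<longrightarrow> syn_adj N0 F ybar i j)"

definition V_prime :: "nat \<Rightarrow> nat \<Rightarrow> nat \<Rightarrow> (nat \<Rightarrow> nat \<Rightarrow> int) \<Rightarrow> (nat \<Rightarrow> nat \<Rightarrow> int) \<Rightarrow> nat set" where
  "V_prime N T N0 F ybar = {i \<in> hat_vertices N N0 F ybar.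
     \<exists>C. hat_clique N N0 F ybar C \<and> i \<in> C \<and> card C \<ge> N - T}"

definition V_star :: "nat \<Rightarrow> nat \<Rightarrow> nat \<Rightarrow> (nat \<Rightarrow> nat \<Rightarrow> int) \<Rightarrow> (nat \<Rightarrow> nat \<Rightarrow> int) \<Rightarrow> nat set" where
  "V_star N T N0 F ybar = {i \<in> V_prime N T N0 F ybar.
     \<forall>j \<in> V_prime N T N0 F ybar. syn_adj N0 F ybar i j}"

end

theory Submission
  imports Defs
begin

text \<open>Let \<open>d = ybar i - y i\<close> for a vertex \<open>i\<close> of \<open>V*\<close>. The uncorrupted positions form a clique
  of size at least \<open>N - T\<close> in the graph, so they lie in \<open>V'\<close> and \<open>i\<close> is adjacent to each of them:
  \<open>d\<close> is orthogonal to \<open>N - T\<close> codewords. These come from a nonsingular choice of rows of the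
  generator matrix, so \<open>d\<close> is orthogonal to every information vector and hence to every codeword,
  in particular to \<open>y i\<close>. The self-loop at \<open>i\<close> then gives \<open>\<langle>d, d\<rangle> = 0\<close>, i.e. \<open>d = 0\<close>.\<close>

lemma ip_cong:
  assumes "\<forall>k<N0. u k = u' k" and "\<forall>k<N0. v k = v' k"
  shows "ip N0 u v = ip N0 u' v'"
  using assms unfolding ip_def by (auto intro!: sum.cong)

lemma ip_diff_left: "ip N0 (\<lambda>k. u k - v k) w = ip N0 u w - ip N0 v w"
  unfolding ip_def by (simp add: algebra_simps sum_subtractf)

lemma ip_self_eq_0_iff: "ip N0 d d = 0 \<longleftrightarrow> (\<forall>k<N0. d k = 0)"
proof -
  have "ip N0 d d = 0 \<longleftrightarrow> (\<forall>k\<in>{..<N0}. d k * d k = 0)"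
    unfolding ip_def by (subst sum_nonneg_eq_0_iff) auto
  thus ?thesis by auto
qed

lemma eq_if_ip_self_eq_and_diff_orthogonal:
  assumes "ip N0 u u = ip N0 v v" and "ip N0 (\<lambda>k. u k - v k) v = 0"
  shows "\<forall>k<N0. u k = v k"
proof -
  have "ip N0 (\<lambda>k. u k - v k) (\<lambda>k. u k - v k)
      = ip N0 u u - ip N0 v v - 2 * ip N0 (\<lambda>k. u k - v k) v"
    unfolding ip_def by (simp add: algebra_simps sum_subtractf sum.distrib sum_distrib_left)
  hence "ip N0 (\<lambda>k. u k - v k) (\<lambda>k. u k - v k) = 0" using assms by simp
  thus ?thesis unfolding ip_self_eq_0_iff by simp
qed

lemma ip_codeword:
  "ip N0 d (codeword K A x i) = (\<Sum>c<K. int (A i c) * ip N0 d (x c))"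
  unfolding ip_def codeword_def
  by (simp add: sum_distrib_left sum_distrib_right mult_ac sum.swap[of _ "{..<K}"])

lemma det_nonzero_kernel_trivial:
  fixes M :: "'a :: idom mat"
  assumes "M \<in> carrier_mat K K" and "det M \<noteq> 0"
    and "\<forall>r<K. (\<Sum>c<K. M $$ (r, c) * w c) = 0"
  shows "\<forall>c<K. w c = 0"
proof -
  have "M *\<^sub>v vec K w = 0\<^sub>v K"
  proof (rule eq_vecI)
    fix r assume "r < dim_vec (0\<^sub>v K :: 'a vec)"
    hence r: "r < K" by simp
    have "(M *\<^sub>v vec K w) $ r = row M r \<bullet> vec K w" using assms(1) r by auto
    also have "\<dots> = (\<Sum>c<K. M $$ (r, c) * w c)"
      using assms(1) r unfolding scalar_prod_def
      by (auto intro!: sum.cong simp: lessThan_atLeast0)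
    finally show "(M *\<^sub>v vec K w) $ r = 0\<^sub>v K $ r" using assms(3) r by simp
  qed (use assms(1) in auto)
  hence "vec K w = 0\<^sub>v K"
    using det_0_iff_vec_prod_zero[OF assms(1)] assms(2) vec_carrier by blast
  thus ?thesis by (metis index_vec index_zero_vec(1))
qed

lemma orthogonal_to_codewords:
  assumes gen: "eligible_generator N K A"
    and S: "S \<subseteq> {..<N}" "card S = K"
    and orth: "\<forall>j\<in>S. ip N0 d (codeword K A x j) = 0"
  shows "ip N0 d (codeword K A x i) = 0"
proof -
  define s where "s = sorted_list_of_set S"
  have finS: "finite S" using S(1) finite_subset by blast
  have s_mem: "s ! r \<in> S" if "r < K" for r
    using that S(2) finS unfolding s_def by (metis length_sorted_list_of_set nth_mem set_sorted_list_of_set)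
  define M where "M = mat K K (\<lambda>(r, c). int (A (s ! r) c))"
  have "M \<in> carrier_mat K K" unfolding M_def by simp
  moreover have "det M \<noteq> 0" using gen S unfolding M_def s_def eligible_generator_def by blast
  moreover have "\<forall>r<K. (\<Sum>c<K. M $$ (r, c) * ip N0 d (x c)) = 0"
  proof (intro allI impI)
    fix r assume r: "r < K"
    have "(\<Sum>c<K. M $$ (r, c) * ip N0 d (x c)) = ip N0 d (codeword K A x (s ! r))"
      unfolding M_def ip_codeword using r by (auto intro!: sum.cong)
    thus "(\<Sum>c<K. M $$ (r, c) * ip N0 d (x c)) = 0" using orth s_mem[OF r] by simp
  qed
  ultimately have "\<forall>c<K. ip N0 d (x c) = 0" by (rule det_nonzero_kernel_trivial)
  thus ?thesis unfolding ip_codeword by simp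
qed

lemma honest_positions_in_V_prime:
  assumes F: "\<forall>i<N. \<forall>j<N. F i j = ip N0 (y i) (y j)"
    and G: "G \<subseteq> {..<N}" "card G \<ge> N - T"
    and honest: "\<forall>j\<in>G. \<forall>k<N0. ybar j k = y j k"
  shows "G \<subseteq> V_prime N T N0 F ybar"
proof -
  have adj: "syn_adj N0 F ybar a b" if "a \<in> G" "b \<in> G" for a b
  proof -
    have "ip N0 (ybar a) (ybar b) = ip N0 (y a) (y b)"
      by (rule ip_cong) (use honest that in auto)
    moreover have "F a b = ip N0 (y a) (y b)" using F G(1) that by auto
    ultimately show ?thesis unfolding syn_adj_def by simp
  qed
  hence "G \<subseteq> hat_vertices N N0 F ybar" using G(1) unfolding hat_vertices_def by auto
  hence "hat_clique N N0 F ybar G" unfolding hat_clique_def using adj by blast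
  thus ?thesis using G(2) \<open>G \<subseteq> hat_vertices N N0 F ybar\<close> unfolding V_prime_def by blast
qed

theorem mainTheorem5:
  fixes N T N0 :: nat
    and A :: "nat \<Rightarrow> nat \<Rightarrow> nat"
    and x ybar :: "nat \<Rightarrow> nat \<Rightarrow> int"
    and F :: "nat \<Rightarrow> nat \<Rightarrow> int"
    and E :: "nat set"
  assumes "T \<ge> 1" and "N > T" and "N0 \<ge> 1"
    and "eligible_generator N (N - T) A"
    and "\<forall>i<N. \<forall>j<N. F i j = ip N0 (codeword (N - T) A x i) (codeword (N - T) A x j)"
    and "E \<subseteq> {..<N}" and "card E \<le> T"
    and "\<forall>i<N. i \<notin> E \<longrightarrow> (\<forall>k<N0. ybar i k = codeword (N - T) A x i k)"
  shows "\<forall>i \<in> V_star N T N0 F ybar. \<forall>k<N0. ybar i k = codeword (N - T) A x i k"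
proof
  fix i assume i: "i \<in> V_star N T N0 F ybar"
  define y where "y = codeword (N - T) A x"
  define G where "G = {..<N} - E"
  have cardG: "card G \<ge> N - T"
    using assms(6,7) unfolding G_def by (simp add: card_Diff_subset finite_subset)
  have honest: "\<forall>j\<in>G. \<forall>k<N0. ybar j k = y j k" using assms(8) unfolding G_def y_def by auto
  have F: "\<forall>i<N. \<forall>j<N. F i j = ip N0 (y i) (y j)" using assms(5) unfolding y_def .
  have GV: "G \<subseteq> V_prime N T N0 F ybar"
    using honest_positions_in_V_prime[OF F _ cardG honest] unfolding G_def by blast
  have iN: "i < N" and adj: "\<forall>j\<in>V_prime N T N0 F ybar. syn_adj N0 F ybar i j"
    using i unfolding V_star_def V_prime_def hat_vertices_def by auto
  define d where "d k = ybar i k - y i k" for k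
  have orth: "ip N0 d (y j) = 0" if j: "j \<in> G" for j
  proof -
    have "ip N0 (ybar i) (y j) = ip N0 (ybar i) (ybar j)"
      by (rule ip_cong) (use honest j in auto)
    also have "\<dots> = F i j" using adj GV j unfolding syn_adj_def by blast
    also have "\<dots> = ip N0 (y i) (y j)" using F iN j unfolding G_def by simp
    finally show ?thesis unfolding d_def ip_diff_left by simp
  qed
  obtain S where S: "S \<subseteq> G" "card S = N - T"
    using obtain_subset_with_card_n[OF cardG] by metis
  have "S \<subseteq> {..<N}" using S(1) unfolding G_def by blast
  hence "ip N0 d (y i) = 0"
    unfolding y_def by (rule orthogonal_to_codewords[OF assms(4) _ S(2)])
      (use orth S(1) in \<open>auto simp: y_def\<close>)
  moreover have "ip N0 (ybar i) (ybar i) = ip N0 (y i) (y i)"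
    using adj i F iN unfolding V_star_def syn_adj_def by auto
  ultimately show "\<forall>k<N0. ybar i k = codeword (N - T) A x i k"
    using eq_if_ip_self_eq_and_diff_orthogonal unfolding d_def y_def by blast
qed

end
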